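(* Let $\tau$ be a primitive, aperiodic substitution and let $g_1,g_2$ be generators for $\tau$. Then $g_1^*\sim_r g_2^*$ holds if and only if there exist generators $g_1'\sim_G g_1$ and $g_2'\sim_G g_2$ whose right wings are identical.
   Context: Let $\mathcal{A}$ be a finite nonempty alphabet, $\mathcal{A}^*$ the finite words over $\mathcal{A}$ (including the empty word), $\mathcal{A}^+$ the nonempty words, $|u|$ the length of $u$. A word $u$ is a factor of $v$ if $v=w_1uw_2$ for some words $w_1,w_2$. A substitution is a map $\tau:\mathcal{A}\to\mathcal{A}^+$ extended to a concatenation-respecting map on words and letterwise to sequences. For $x\in\mathcal{A}^{\mathbb{Z}}$, $x_{[i]}$ denotes the letter at index $i$ and $x_{[i,j]}$ the word $x_{[i]}\cdots x_{[j]}$. The language $\mathcal{L}(\tau)$ is the set of words that are factors of $\tau^n(a)$ for some letter $a$ and some $n\ge1$; $X_\tau=\{x\in\mathcal{A}^{\mathbb{Z}}: x_{[i,j]}\in\mathcal{L}(\tau)\ \forall i\le j\}$. $\tau$ is primitive if there is $n\ge1$ such that every letter $b$ is a factor of $\tau^n(a)$ for every letter $a$, and there is a letter $a$ such that for every $N$ there is $n$ with $|\tau^n(a)|>N$; a primitive $\tau$ is aperiodic if $X_\tau$ is infinite. A generator for $\tau$ is a triple $(v,u,w)$ with $v,u,w\in\mathcal{A}^+$, $u\in\mathcal{L}(\tau)$ and $\tau(u)=vuw$; $v$, $u$, $w$ are its left wing, center and right wing, and its length is $|u|$. Its completion $(v,u,w)^*\in X_\tau$ is the two-sided sequence $\cdots\tau^2(v)\tau(v)vu.w\tau(w)\tau^2(w)\cdots$,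 i.e. the left-infinite word $\cdots\tau^2(v)\tau(v)vu$ occupies the negative indices, ending at index $-1$, and the right-infinite word $w\tau(w)\tau^2(w)\cdots$ occupies the indices $\ge0$, starting at index $0$. If $(v,u,cw)$ is a generator with $c\in\mathcal{A}$, $w\in\mathcal{A}^*$, its right extension is the generator $(v,uc,w\tau(c))$; if $(vc,u,w)$ is a generator with $c\in\mathcal{A}$, $v\in\mathcal{A}^*$, its left extension is the generator $(\tau(c)v,cu,w)$. Two generators $g_1,g_2$ are G related ($g_1\sim_G g_2$) if there is a generator $g_3$ obtainable from $g_1$ and also from $g_2$ by finite (possibly empty) sequences of left and right extensions. For $x,y\in X_\tau$, $x\sim_r y$ (right tail equivalence) means there are $m,M\in\mathbb{Z}$ with $x_{[i]}=y_{[i+m]}$ for all $i\ge M$. *)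

theory Defs
  imports Main
begin

definition subst_word :: "('a \<Rightarrow> 'a list) \<Rightarrow> 'a list \<Rightarrow> 'a list" where
  "subst_word \<tau> u = concat (map \<tau> u)"

definition factor :: "'a list \<Rightarrow> 'a list \<Rightarrow> bool" where
  "factor u v \<longleftrightarrow> (\<exists>w1 w2. v = w1 @ u @ w2)"

definition lang :: "('a \<Rightarrow> 'a list) \<Rightarrow> 'a list set" where
  "lang \<tau> = {u. \<exists>a n. n \<ge> 1 \<and> factor u ((subst_word \<tau> ^^ n) [a])}"

definition window :: "(int \<Rightarrow> 'a) \<Rightarrow> int \<Rightarrow> int \<Rightarrow> 'a list" where
  "window x i j = map (\<lambda>k. x (i + int k)) [0..<nat (j - i + 1)]"

definition shift_space :: "('a \<Rightarrow> 'a list) \<Rightarrow> (int \<Rightarrow> 'a) set" where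
  "shift_space \<tau> = {x. \<forall>i j. i \<le> j \<longrightarrow> window x i j \<in> lang \<tau>}"

definition primitive :: "('a \<Rightarrow> 'a list) \<Rightarrow> bool" where
  "primitive \<tau> \<longleftrightarrow> (\<forall>a. \<tau> a \<noteq> []) \<and>
     (\<exists>n\<ge>1. \<forall>a b. factor [b] ((subst_word \<tau> ^^ n) [a])) \<and>
     (\<exists>a. \<forall>N. \<exists>n. length ((subst_word \<tau> ^^ n) [a]) > N)"

definition aperiodic :: "('a \<Rightarrow> 'a list) \<Rightarrow> bool" where
  "aperiodic \<tau> \<longleftrightarrow> primitive \<tau> \<and> infinite (shift_space \<tau>)"

type_synonym 'a gen = "'a list \<times> 'a list \<times> 'a list"

definition generator :: "('a \<Rightarrow> 'a list) \<Rightarrow> 'a gen \<Rightarrow> bool" where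
  "generator \<tau> g \<longleftrightarrow> (case g of (v, u, w) \<Rightarrow>
     v \<noteq> [] \<and> u \<noteq> [] \<and> w \<noteq> [] \<and> u \<in> lang \<tau> \<and> subst_word \<tau> u = v @ u @ w)"

definition right_wing :: "'a gen \<Rightarrow> 'a list" where
  "right_wing g = snd (snd g)"

text \<open>Completion: indices >= 0 carry w tau(w) tau^2(w) ...; indices < 0 carry
... tau^2(v) tau(v) v u, ending at index -1.\<close>

definition right_seq :: "('a \<Rightarrow> 'a list) \<Rightarrow> 'a list \<Rightarrow> nat \<Rightarrow> 'a" where
  "right_seq \<tau> w i = concat (map (\<lambda>k. (subst_word \<tau> ^^ k) w) [0..<Suc i]) ! i"

definition left_seq :: "('a \<Rightarrow> 'a list) \<Rightarrow> 'a list \<Rightarrow> 'a list \<Rightarrow> nat \<Rightarrow> 'a" where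
  "left_seq \<tau> v u i =
     rev (concat (map (\<lambda>k. (subst_word \<tau> ^^ k) v) (rev [0..<i])) @ u) ! (i - 1)"
  \<comment> \<open>letter at index -i, for i >= 1\<close>

definition completion :: "('a \<Rightarrow> 'a list) \<Rightarrow> 'a gen \<Rightarrow> (int \<Rightarrow> 'a)" where
  "completion \<tau> g = (case g of (v, u, w) \<Rightarrow>
     (\<lambda>i. if 0 \<le> i then right_seq \<tau> w (nat i) else left_seq \<tau> v u (nat (- i))))"

definition right_ext :: "('a \<Rightarrow> 'a list) \<Rightarrow> 'a gen \<Rightarrow> 'a gen \<Rightarrow> bool" where
  "right_ext \<tau> g g' \<longleftrightarrow> generator \<tau> g \<and>
     (\<exists>v u c w. g = (v, u, c # w) \<and> g' = (v, u @ [c], w @ \<tau> c))"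

definition left_ext :: "('a \<Rightarrow> 'a list) \<Rightarrow> 'a gen \<Rightarrow> 'a gen \<Rightarrow> bool" where
  "left_ext \<tau> g g' \<longleftrightarrow> generator \<tau> g \<and>
     (\<exists>v u c w. g = (v @ [c], u, w) \<and> g' = (\<tau> c @ v, c # u, w))"

definition ext_step :: "('a \<Rightarrow> 'a list) \<Rightarrow> 'a gen \<Rightarrow> 'a gen \<Rightarrow> bool" where
  "ext_step \<tau> g g' \<longleftrightarrow> left_ext \<tau> g g' \<or> right_ext \<tau> g g'"

definition G_related :: "('a \<Rightarrow> 'a list) \<Rightarrow> 'a gen \<Rightarrow> 'a gen \<Rightarrow> bool" where
  "G_related \<tau> g1 g2 \<longleftrightarrow> generator \<tau> g1 \<and> generator \<tau> g2 \<and>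
     (\<exists>g3. (ext_step \<tau>)\<^sup>*\<^sup>* g1 g3 \<and> (ext_step \<tau>)\<^sup>*\<^sup>* g2 g3)"

definition right_tail_equiv :: "(int \<Rightarrow> 'a) \<Rightarrow> (int \<Rightarrow> 'a) \<Rightarrow> bool" where
  "right_tail_equiv x y \<longleftrightarrow> (\<exists>m M. \<forall>i\<ge>M. x i = y (i + m))"

end

theory Submission
  imports Defs "HOL-Library.Sublist"
begin

text \<open>A left extension keeps the right wing and a right extension
\<open>(v, u, c w) \<mapsto> (v, u c, w \<tau>(c))\<close> shifts the right half \<open>w \<tau>(w) \<tau>\<^sup>2(w) \<dots>\<close> of the completion
by one letter, so G-related generators have right tail equivalent completions.
Conversely, if the completions agree from some point on up to a shift, right-extend both
generators until the right halves \<open>R\<close> coincide. Then the right wings are equal: otherwise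
one is a proper prefix \<open>w\<close> of the other, \<open>w z\<close>, and \<open>R = w \<tau>(R) = w z \<tau>(R)\<close> makes \<open>R\<close>
eventually \<open>|z|\<close>-periodic; by primitivity every word of the language occurs in that
periodic part, so every point of \<open>X\<^sub>\<tau>\<close> is \<open>|z|\<close>-periodic and \<open>X\<^sub>\<tau>\<close> is finite,
contradicting aperiodicity.\<close>

lemma subst_word_Nil [simp]: "subst_word \<tau> [] = []"
  by (simp add: subst_word_def)

lemma subst_word_Cons [simp]: "subst_word \<tau> (a # xs) = \<tau> a @ subst_word \<tau> xs"
  by (simp add: subst_word_def)

lemma subst_word_append [simp]: "subst_word \<tau> (xs @ ys) = subst_word \<tau> xs @ subst_word \<tau> ys"
  by (simp add: subst_word_def)

lemma subst_word_pow_append: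
  "(subst_word \<tau> ^^ k) (xs @ ys) = (subst_word \<tau> ^^ k) xs @ (subst_word \<tau> ^^ k) ys"
  by (induction k) auto

lemma length_subst_word_ge:
  assumes "\<forall>a. \<tau> a \<noteq> []"
  shows "length xs \<le> length (subst_word \<tau> xs)"
proof (induction xs)
  case (Cons a xs)
  have "0 < length (\<tau> a)" using assms by simp
  with Cons.IH show ?case by (simp only: subst_word_Cons length_append length_Cons)
qed simp

lemma length_subst_word_pow_ge:
  assumes "\<forall>a. \<tau> a \<noteq> []"
  shows "length xs \<le> length ((subst_word \<tau> ^^ k) xs)"
  by (induction k) (auto intro: le_trans length_subst_word_ge[OF assms])

lemma prefix_nth: "prefix xs ys \<Longrightarrow> i < length xs \<Longrightarrow> xs ! i = ys ! i"
  by (auto elim: prefixE simp: nth_append)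

lemma prefix_subst_word: "prefix xs ys \<Longrightarrow> prefix (subst_word \<tau> xs) (subst_word \<tau> ys)"
  by (auto elim!: prefixE intro: prefixI)

lemma factor_eq_sublist: "factor = sublist"
  by (auto simp: fun_eq_iff factor_def sublist_def)

lemma sublist_subst_word: "sublist xs ys \<Longrightarrow> sublist (subst_word \<tau> xs) (subst_word \<tau> ys)"
  unfolding sublist_def by (metis subst_word_append)

lemma sublist_subst_word_pow:
  "sublist xs ys \<Longrightarrow> sublist ((subst_word \<tau> ^^ k) xs) ((subst_word \<tau> ^^ k) ys)"
  by (induction k) (auto intro: sublist_subst_word)

lemma lang_sublist_closed: "u \<in> lang \<tau> \<Longrightarrow> sublist s u \<Longrightarrow> s \<in> lang \<tau>"
  unfolding lang_def factor_eq_sublist by (blast intro: sublist_order.order.trans)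

lemma subst_word_in_lang: "u \<in> lang \<tau> \<Longrightarrow> subst_word \<tau> u \<in> lang \<tau>"
proof -
  assume "u \<in> lang \<tau>"
  then obtain a n where "n \<ge> 1" and "sublist u ((subst_word \<tau> ^^ n) [a])"
    unfolding lang_def factor_eq_sublist by blast
  then have "Suc n \<ge> 1" and "sublist (subst_word \<tau> u) ((subst_word \<tau> ^^ Suc n) [a])"
    by (simp_all add: sublist_subst_word)
  then show ?thesis unfolding lang_def factor_eq_sublist by blast
qed

section \<open>The right half of a completion\<close>

definition wing_prefix :: "('a \<Rightarrow> 'a list) \<Rightarrow> 'a list \<Rightarrow> nat \<Rightarrow> 'a list" where
  "wing_prefix \<tau> w n = concat (map (\<lambda>k. (subst_word \<tau> ^^ k) w) [0..<n])"

lemma wing_prefix_0 [simp]: "wing_prefix \<tau> w 0 = []"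
  by (simp add: wing_prefix_def)

lemma wing_prefix_Suc: "wing_prefix \<tau> w (Suc n) = wing_prefix \<tau> w n @ (subst_word \<tau> ^^ n) w"
  by (simp add: wing_prefix_def)

lemma wing_prefix_Suc': "wing_prefix \<tau> w (Suc n) = w @ subst_word \<tau> (wing_prefix \<tau> w n)"
proof (induction n)
  case (Suc n)
  have "wing_prefix \<tau> w (Suc (Suc n)) = wing_prefix \<tau> w (Suc n) @ (subst_word \<tau> ^^ Suc n) w"
    by (rule wing_prefix_Suc)
  also have "\<dots> = w @ subst_word \<tau> (wing_prefix \<tau> w n @ (subst_word \<tau> ^^ n) w)"
    using Suc.IH by simp
  also have "\<dots> = w @ subst_word \<tau> (wing_prefix \<tau> w (Suc n))"
    by (simp only: wing_prefix_Suc)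
  finally show ?case .
qed (simp add: wing_prefix_def)

lemma length_wing_prefix_ge:
  assumes "\<forall>a. \<tau> a \<noteq> []" and "w \<noteq> []"
  shows "n \<le> length (wing_prefix \<tau> w n)"
proof (induction n)
  case (Suc n)
  have "length w \<le> length ((subst_word \<tau> ^^ n) w)"
    by (rule length_subst_word_pow_ge[OF assms(1)])
  moreover have "0 < length w" using assms(2) by simp
  ultimately show ?case using Suc.IH
    by (simp only: wing_prefix_Suc length_append)
qed simp

lemma prefix_wing_prefix_mono: "n \<le> n' \<Longrightarrow> prefix (wing_prefix \<tau> w n) (wing_prefix \<tau> w n')"
proof (induction n' rule: dec_induct)
  case (step m)
  then show ?case by (auto simp: wing_prefix_Suc intro: prefix_order.trans)
qed simp

lemma right_seq_eq_wing_prefix_nth: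
  assumes "\<forall>a. \<tau> a \<noteq> []" and "w \<noteq> []" and "i < length (wing_prefix \<tau> w n)"
  shows "right_seq \<tau> w i = wing_prefix \<tau> w n ! i"
proof -
  have unfolded: "right_seq \<tau> w i = wing_prefix \<tau> w (Suc i) ! i"
    by (simp add: right_seq_def wing_prefix_def)
  show ?thesis
  proof (cases "n \<le> Suc i")
    case True
    then show ?thesis using unfolded assms(3) prefix_wing_prefix_mono prefix_nth by metis
  next
    case False
    have "i < length (wing_prefix \<tau> w (Suc i))"
      using length_wing_prefix_ge[OF assms(1,2), of "Suc i"] by simp
    with False show ?thesis using unfolded prefix_wing_prefix_mono prefix_nth
      by (metis nat_le_linear)
  qed
qed

lemma wing_prefix_eq_map_right_seq:
  assumes "\<forall>a. \<tau> a \<noteq> []" and "w \<noteq> []"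
  shows "wing_prefix \<tau> w n = map (right_seq \<tau> w) [0..<length (wing_prefix \<tau> w n)]"
  by (rule nth_equalityI) (auto simp: right_seq_eq_wing_prefix_nth[OF assms])

lemma right_seq_nth:
  assumes "\<forall>a. \<tau> a \<noteq> []" and "i < length w"
  shows "right_seq \<tau> w i = w ! i"
proof -
  have "w \<noteq> []" using assms(2) by auto
  then show ?thesis
    using right_seq_eq_wing_prefix_nth[OF assms(1), of w i 1] assms(2)
    by (simp add: wing_prefix_def)
qed

lemma wing_prefix_Cons_shift:
  "c # wing_prefix \<tau> (w @ \<tau> c) n = wing_prefix \<tau> (c # w) n @ (subst_word \<tau> ^^ n) [c]"
proof (induction n)
  case (Suc n)
  have "wing_prefix \<tau> (c # w) (Suc n) @ (subst_word \<tau> ^^ Suc n) [c]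
      = (c # w) @ subst_word \<tau> (wing_prefix \<tau> (c # w) n @ (subst_word \<tau> ^^ n) [c])"
    by (simp add: wing_prefix_Suc')
  also have "\<dots> = c # wing_prefix \<tau> (w @ \<tau> c) (Suc n)"
    by (simp add: wing_prefix_Suc' flip: Suc.IH)
  finally show ?case by simp
qed simp

lemma right_seq_Cons_Suc:
  assumes ne: "\<forall>a. \<tau> a \<noteq> []"
  shows "right_seq \<tau> (c # w) (Suc i) = right_seq \<tau> (w @ \<tau> c) i"
proof -
  let ?n = "Suc (Suc i)"
  have l1: "Suc i < length (wing_prefix \<tau> (c # w) ?n)"
    using length_wing_prefix_ge[OF ne, of "c # w" ?n] by simp
  have l2: "i < length (wing_prefix \<tau> (w @ \<tau> c) ?n)"
    using length_wing_prefix_ge[OF ne, of "w @ \<tau> c" ?n] ne by simp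
  have "wing_prefix \<tau> (c # w) ?n ! Suc i = (c # wing_prefix \<tau> (w @ \<tau> c) ?n) ! Suc i"
    using l1 by (metis nth_append wing_prefix_Cons_shift)
  then show ?thesis
    using l1 l2 ne by (simp add: right_seq_eq_wing_prefix_nth[OF ne])
qed

text \<open>The right-infinite word \<open>R = w \<tau>(w) \<tau>\<^sup>2(w) \<dots>\<close> is the fixed point of \<open>R = w \<tau>(R)\<close>.\<close>

lemma right_seq_self_similar:
  assumes ne: "\<forall>a. \<tau> a \<noteq> []" and w: "w \<noteq> []"
    and j: "j < length (subst_word \<tau> (map (right_seq \<tau> w) [0..<n]))"
  shows "right_seq \<tau> w (length w + j) = subst_word \<tau> (map (right_seq \<tau> w) [0..<n]) ! j"
proof -
  let ?R = "right_seq \<tau> w"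
  have "map ?R [0..<n] = take n (wing_prefix \<tau> w n)"
    using length_wing_prefix_ge[OF ne w, of n]
    by (subst wing_prefix_eq_map_right_seq[OF ne w]) (simp add: take_map)
  then have prefix: "prefix (subst_word \<tau> (map ?R [0..<n])) (subst_word \<tau> (wing_prefix \<tau> w n))"
    by (simp add: prefix_subst_word take_is_prefix)
  have "length w + j < length (wing_prefix \<tau> w (Suc n))"
    using j prefix_length_le[OF prefix] by (simp add: wing_prefix_Suc')
  then have "?R (length w + j) = wing_prefix \<tau> w (Suc n) ! (length w + j)"
    by (rule right_seq_eq_wing_prefix_nth[OF ne w])
  also have "\<dots> = subst_word \<tau> (wing_prefix \<tau> w n) ! j"
    by (simp add: wing_prefix_Suc' nth_append)
  also have "\<dots> = subst_word \<tau> (map ?R [0..<n]) ! j"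
    using prefix_nth[OF prefix j] by simp
  finally show ?thesis .
qed

section \<open>Equal right halves force equal right wings\<close>

lemma right_seq_eventually_periodic:
  assumes ne: "\<forall>a. \<tau> a \<noteq> []" and w: "w \<noteq> []"
    and eq: "right_seq \<tau> w = right_seq \<tau> (w @ z)" and i: "length w \<le> i"
  shows "right_seq \<tau> w (i + length z) = right_seq \<tau> w i"
proof -
  let ?R = "right_seq \<tau> w"
  define j where "j = i - length w"
  let ?img = "subst_word \<tau> (map ?R [0..<Suc j])"
  have j: "j < length ?img"
    using length_subst_word_ge[OF ne, of "map ?R [0..<Suc j]"] by simp
  have "?R i = ?img ! j"
    using right_seq_self_similar[OF ne w j] i by (simp add: j_def)
  moreover have "?R (i + length z) = ?img ! j"
    using right_seq_self_similar[OF ne _ j[unfolded eq], unfolded eq[symmetric]] w i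
    by (simp add: j_def add.commute add.left_commute)
  ultimately show ?thesis by simp
qed

lemma lang_occurs_in_subst_word_pow:
  assumes prim: "primitive \<tau>" and w: "w \<noteq> []" and u: "u \<in> lang \<tau>"
  shows "\<exists>N\<ge>1. sublist u ((subst_word \<tau> ^^ N) w)"
proof -
  obtain n0 where n0: "\<forall>a b. sublist [b] ((subst_word \<tau> ^^ n0) [a])"
    using prim unfolding primitive_def factor_eq_sublist by blast
  obtain a n where n: "n \<ge> 1" and "sublist u ((subst_word \<tau> ^^ n) [a])"
    using u unfolding lang_def factor_eq_sublist by blast
  obtain c w' where cw: "w = [c] @ w'" using w by (cases w) auto
  have "sublist ((subst_word \<tau> ^^ n) [a]) ((subst_word \<tau> ^^ (n + n0)) [c])"
    using sublist_subst_word_pow[OF n0[rule_format]] by (simp add: funpow_add)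
  moreover have "sublist ((subst_word \<tau> ^^ (n + n0)) [c]) ((subst_word \<tau> ^^ (n + n0)) w)"
    unfolding cw subst_word_pow_append by simp
  ultimately have "sublist u ((subst_word \<tau> ^^ (n + n0)) w)"
    using \<open>sublist u _\<close> by (blast intro: sublist_order.order.trans)
  then show ?thesis using n by (intro exI[of _ "n + n0"]) simp
qed

lemma subst_word_pow_occurs_in_right_seq:
  assumes ne: "\<forall>a. \<tau> a \<noteq> []" and w: "w \<noteq> []" and N: "1 \<le> N"
    and u: "sublist u ((subst_word \<tau> ^^ N) w)"
  shows "\<exists>p\<ge>length w. u = map (right_seq \<tau> w) [p..<p + length u]"
proof -
  obtain s1 s2 where s: "(subst_word \<tau> ^^ N) w = s1 @ u @ s2"
    using u unfolding sublist_def by blast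
  define p where "p = length (wing_prefix \<tau> w N) + length s1"
  have wp: "wing_prefix \<tau> w (Suc N) = wing_prefix \<tau> w N @ s1 @ u @ s2"
    by (simp add: wing_prefix_Suc s)
  obtain N' where "N = Suc N'" using N by (cases N) auto
  then have "length w \<le> p" by (simp add: p_def wing_prefix_Suc')
  moreover have "u = map (right_seq \<tau> w) [p..<p + length u]"
  proof (rule nth_equalityI)
    fix k assume "k < length u"
    then show "u ! k = map (right_seq \<tau> w) [p..<p + length u] ! k"
      by (simp add: right_seq_eq_wing_prefix_nth[OF ne w, of _ "Suc N"] wp p_def nth_append)
  qed simp
  ultimately show ?thesis by blast
qed

lemma shift_space_periodic_if_right_seq_eq_append:
  assumes prim: "primitive \<tau>" and w: "w \<noteq> []"
    and eq: "right_seq \<tau> w = right_seq \<tau> (w @ z)" and x: "x \<in> shift_space \<tau>"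
  shows "x (i + int (length z)) = x i"
proof -
  have ne: "\<forall>a. \<tau> a \<noteq> []" using prim by (simp add: primitive_def)
  let ?q = "length z"
  have "window x i (i + int ?q) = map (\<lambda>k. x (i + int k)) [0..<Suc ?q]"
    by (simp add: window_def nat_add_distrib)
  moreover have "window x i (i + int ?q) \<in> lang \<tau>"
    using x by (simp add: shift_space_def)
  ultimately obtain p where p: "length w \<le> p"
    and occ: "map (\<lambda>k. x (i + int k)) [0..<Suc ?q] = map (right_seq \<tau> w) [p..<p + Suc ?q]"
    using lang_occurs_in_subst_word_pow[OF prim w]
      subst_word_pow_occurs_in_right_seq[OF ne w] by force
  have "x i = right_seq \<tau> w p"
    using arg_cong[OF occ, of "\<lambda>l. l ! 0"] by (simp del: upt_Suc)
  moreover have "x (i + int ?q) = right_seq \<tau> w (p + ?q)"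
    using arg_cong[OF occ, of "\<lambda>l. l ! ?q"] by (simp del: upt_Suc)
  ultimately show ?thesis
    using right_seq_eventually_periodic[OF ne w eq p] by simp
qed

lemma periodic_fun_mod:
  fixes x :: "int \<Rightarrow> 'a"
  assumes per: "\<forall>i. x (i + q) = x i"
  shows "x (i mod q) = x i"
proof -
  have "x (i + k * q) = x i" for k
  proof (induction k rule: int_induct[of _ 0])
    case (step1 k)
    then show ?case using per[rule_format, of "i + k * q"] by (simp add: algebra_simps)
  next
    case (step2 k)
    then show ?case using per[rule_format, of "i + (k - 1) * q"] by (simp add: algebra_simps)
  qed simp
  from this[of "- (i div q)"] show ?thesis
    by (simp add: minus_div_mult_eq_mod[symmetric] algebra_simps)
qed

lemma finite_periodic_funs:
  assumes "0 < q"
  shows "finite {x :: int \<Rightarrow> 'a::finite. \<forall>i. x (i + int q) = x i}"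
proof (rule finite_subset)
  let ?decode = "\<lambda>xs i. xs ! nat (i mod int q)"
  show "{x :: int \<Rightarrow> 'a. \<forall>i. x (i + int q) = x i} \<subseteq> ?decode ` {xs. length xs = q}"
  proof
    fix x :: "int \<Rightarrow> 'a" assume "x \<in> {x. \<forall>i. x (i + int q) = x i}"
    then have per: "\<forall>i. x (i + int q) = x i" by simp
    have "x i = ?decode (map (\<lambda>k. x (int k)) [0..<q]) i" for i
    proof -
      have "0 \<le> i mod int q" and "i mod int q < int q" using assms by simp_all
      then have "nat (i mod int q) < q" by linarith
      then show ?thesis by (simp add: periodic_fun_mod[OF per])
    qed
    then have "x = ?decode (map (\<lambda>k. x (int k)) [0..<q])" by blast
    then show "x \<in> ?decode ` {xs. length xs = q}" by (intro image_eqI) auto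
  qed
  show "finite (?decode ` {xs :: 'a list. length xs = q})"
    using finite_lists_length_eq[of "UNIV :: 'a set" q] by simp
qed

lemma right_seq_inj:
  fixes \<tau> :: "'a::finite \<Rightarrow> 'a list"
  assumes ap: "aperiodic \<tau>" and w1: "w1 \<noteq> []" and w2: "w2 \<noteq> []"
    and eq: "right_seq \<tau> w1 = right_seq \<tau> w2"
  shows "w1 = w2"
proof -
  have prim: "primitive \<tau>" and inf: "infinite (shift_space \<tau>)"
    using ap by (simp_all add: aperiodic_def)
  have ne: "\<forall>a. \<tau> a \<noteq> []" using prim by (simp add: primitive_def)
  have prefix_case: "w = w'"
    if w: "w \<noteq> []" and "right_seq \<tau> w = right_seq \<tau> w'" and "length w \<le> length w'" for w w'
  proof -
    have "w = take (length w) w'"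
    proof (rule nth_equalityI)
      fix k assume "k < length w"
      then have "w ! k = w' ! k"
        using that right_seq_nth[OF ne] by (metis order_less_le_trans)
      then show "w ! k = take (length w) w' ! k" using \<open>k < length w\<close> by simp
    qed (use that(3) in simp)
    then obtain z where w': "w' = w @ z" by (metis append_take_drop_id)
    have "z = []"
    proof (rule ccontr)
      assume "z \<noteq> []"
      then have "shift_space \<tau> \<subseteq> {x. \<forall>i. x (i + int (length z)) = x i}"
        using shift_space_periodic_if_right_seq_eq_append[OF prim w] that(2) w' by blast
      then show False
        using finite_periodic_funs[of "length z"] \<open>z \<noteq> []\<close> inf finite_subset by auto
    qed
    with w' show ?thesis by simp
  qed
  show ?thesis
    using prefix_case[OF w1 eq] prefix_case[OF w2 eq[symmetric]] by fastforce
qed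

lemma completion_nonneg:
  "0 \<le> i \<Longrightarrow> completion \<tau> g i = right_seq \<tau> (right_wing g) (nat i)"
  by (cases g) (simp add: completion_def right_wing_def)

lemma right_tail_equiv_refl: "right_tail_equiv x x"
  unfolding right_tail_equiv_def by (intro exI[of _ 0]) simp

lemma right_tail_equiv_sym: "right_tail_equiv x y \<Longrightarrow> right_tail_equiv y x"
  unfolding right_tail_equiv_def
proof (elim exE)
  fix m M assume "\<forall>i\<ge>M. x i = y (i + m)"
  then have "\<forall>i\<ge>M + m. y i = x (i + - m)"
    by (metis add.commute add_le_cancel_left diff_add_cancel uminus_add_conv_diff)
  then show "\<exists>m M. \<forall>i\<ge>M. y i = x (i + m)" by blast
qed

lemma right_tail_equiv_trans:
  "right_tail_equiv x y \<Longrightarrow> right_tail_equiv y z \<Longrightarrow> right_tail_equiv x z"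
  unfolding right_tail_equiv_def
proof (elim exE)
  fix m M m' M' assume "\<forall>i\<ge>M. x i = y (i + m)" and "\<forall>i\<ge>M'. y i = z (i + m')"
  then have "\<forall>i\<ge>max M (M' - m). x i = z (i + (m + m'))"
    by (simp add: add.assoc)
  then show "\<exists>m M. \<forall>i\<ge>M. x i = z (i + m)" by blast
qed

lemma right_tail_equiv_completion_if_right_wing_eq:
  "right_wing g = right_wing g' \<Longrightarrow> right_tail_equiv (completion \<tau> g) (completion \<tau> g')"
  unfolding right_tail_equiv_def
  by (intro exI[of _ 0]) (simp add: completion_nonneg)

lemma right_seq_right_ext:
  assumes ne: "\<forall>a. \<tau> a \<noteq> []" and "right_ext \<tau> g g'"
  shows "right_seq \<tau> (right_wing g') i = right_seq \<tau> (right_wing g) (Suc i)"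
  using assms(2) by (auto simp: right_ext_def right_wing_def right_seq_Cons_Suc[OF ne])

lemma right_tail_equiv_ext_step:
  assumes ne: "\<forall>a. \<tau> a \<noteq> []" and "ext_step \<tau> g g'"
  shows "right_tail_equiv (completion \<tau> g) (completion \<tau> g')"
  using assms(2) unfolding ext_step_def
proof
  assume "left_ext \<tau> g g'"
  then have "right_wing g = right_wing g'" by (auto simp: left_ext_def right_wing_def)
  then show ?thesis by (rule right_tail_equiv_completion_if_right_wing_eq)
next
  assume ext: "right_ext \<tau> g g'"
  have "completion \<tau> g i = completion \<tau> g' (i + - 1)" if "1 \<le> i" for i
  proof -
    have "nat i = Suc (nat (i - 1))" using that by simp
    then show ?thesis
      using that by (simp add: completion_nonneg right_seq_right_ext[OF ne ext])
  qed
  then show ?thesis unfolding right_tail_equiv_def by blast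
qed

lemma right_tail_equiv_if_G_related:
  assumes ne: "\<forall>a. \<tau> a \<noteq> []" and "G_related \<tau> g g'"
  shows "right_tail_equiv (completion \<tau> g) (completion \<tau> g')"
proof -
  have star: "right_tail_equiv (completion \<tau> g) (completion \<tau> g'')"
    if "(ext_step \<tau>)\<^sup>*\<^sup>* g g''" for g g''
    using that
    by induction (blast intro: right_tail_equiv_refl right_tail_equiv_trans
        right_tail_equiv_ext_step[OF ne])+
  obtain g3 where "(ext_step \<tau>)\<^sup>*\<^sup>* g g3" and "(ext_step \<tau>)\<^sup>*\<^sup>* g' g3"
    using assms(2) unfolding G_related_def by blast
  then show ?thesis
    by (blast intro: star right_tail_equiv_trans right_tail_equiv_sym)
qed

lemma right_ext_exists:
  assumes ne: "\<forall>a. \<tau> a \<noteq> []" and gen: "generator \<tau> g"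
  shows "\<exists>g'. right_ext \<tau> g g' \<and> generator \<tau> g'"
proof -
  obtain v u c w where g: "g = (v, u, c # w)"
    using gen by (cases g; cases "right_wing g") (auto simp: generator_def right_wing_def)
  have img: "subst_word \<tau> u = v @ (u @ [c]) @ w" and u: "u \<in> lang \<tau>" and "v \<noteq> []"
    using gen by (simp_all add: generator_def g)
  have "sublist (u @ [c]) (subst_word \<tau> u)"
    unfolding img by (rule sublist_appendI)
  then have "u @ [c] \<in> lang \<tau>"
    by (rule lang_sublist_closed[OF subst_word_in_lang[OF u]])
  then have "generator \<tau> (v, u @ [c], w @ \<tau> c)"
    using img \<open>v \<noteq> []\<close> ne by (simp add: generator_def)
  moreover have "right_ext \<tau> g (v, u @ [c], w @ \<tau> c)"
    using gen g by (simp add: right_ext_def)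
  ultimately show ?thesis by blast
qed

lemma right_ext_iterate:
  assumes ne: "\<forall>a. \<tau> a \<noteq> []" and gen: "generator \<tau> g"
  shows "\<exists>g'. generator \<tau> g' \<and> (ext_step \<tau>)\<^sup>*\<^sup>* g g' \<and>
    (\<forall>i. right_seq \<tau> (right_wing g') i = right_seq \<tau> (right_wing g) (i + k))"
proof (induction k)
  case 0
  show ?case using gen by (intro exI[of _ g]) simp
next
  case (Suc k)
  then obtain g' where "generator \<tau> g'" and "(ext_step \<tau>)\<^sup>*\<^sup>* g g'"
    and shift: "\<forall>i. right_seq \<tau> (right_wing g') i = right_seq \<tau> (right_wing g) (i + k)"
    by blast
  moreover obtain g'' where "right_ext \<tau> g' g''" and "generator \<tau> g''"
    using right_ext_exists[OF ne \<open>generator \<tau> g'\<close>] by blast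
  moreover have "ext_step \<tau> g' g''"
    using \<open>right_ext \<tau> g' g''\<close> by (simp add: ext_step_def)
  ultimately show ?case
    by (intro exI[of _ g'']) (auto simp: right_seq_right_ext[OF ne])
qed

lemma right_seq_shift_if_right_tail_equiv:
  assumes "right_tail_equiv (completion \<tau> g1) (completion \<tau> g2)"
  shows "\<exists>a b. \<forall>i. right_seq \<tau> (right_wing g1) (i + a) = right_seq \<tau> (right_wing g2) (i + b)"
proof -
  obtain m M where eq: "\<forall>i\<ge>M. completion \<tau> g1 i = completion \<tau> g2 (i + m)"
    using assms unfolding right_tail_equiv_def by blast
  define a where "a = nat (max M (- m))"
  define b where "b = nat (int a + m)"
  have "right_seq \<tau> (right_wing g1) (i + a) = right_seq \<tau> (right_wing g2) (i + b)" for i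
  proof -
    have "M \<le> int (i + a)" and "0 \<le> int (i + a) + m" and "nat (int (i + a) + m) = i + b"
      unfolding a_def b_def by linarith+
    then show ?thesis
      using eq by (metis completion_nonneg nat_int of_nat_0_le_iff)
  qed
  then show ?thesis by blast
qed

lemma right_wing_nonempty: "generator \<tau> g \<Longrightarrow> right_wing g \<noteq> []"
  by (cases g) (simp add: generator_def right_wing_def)

lemma common_right_wing_if_right_tail_equiv:
  fixes \<tau> :: "'a::finite \<Rightarrow> 'a list"
  assumes ap: "aperiodic \<tau>" and gen: "generator \<tau> g1" "generator \<tau> g2"
    and "right_tail_equiv (completion \<tau> g1) (completion \<tau> g2)"
  shows "\<exists>g1' g2'. generator \<tau> g1' \<and> generator \<tau> g2' \<and>
    (ext_step \<tau>)\<^sup>*\<^sup>* g1 g1' \<and> (ext_step \<tau>)\<^sup>*\<^sup>* g2 g2' \<and> right_wing g1' = right_wing g2'"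
proof -
  have ne: "\<forall>a. \<tau> a \<noteq> []" using ap by (simp add: aperiodic_def primitive_def)
  obtain a b
    where shift: "\<forall>i. right_seq \<tau> (right_wing g1) (i + a) = right_seq \<tau> (right_wing g2) (i + b)"
    using right_seq_shift_if_right_tail_equiv[OF assms(4)] by blast
  obtain g1' where g1': "generator \<tau> g1'" "(ext_step \<tau>)\<^sup>*\<^sup>* g1 g1'"
    and R1: "\<forall>i. right_seq \<tau> (right_wing g1') i = right_seq \<tau> (right_wing g1) (i + a)"
    using right_ext_iterate[OF ne gen(1)] by blast
  obtain g2' where g2': "generator \<tau> g2'" "(ext_step \<tau>)\<^sup>*\<^sup>* g2 g2'"
    and R2: "\<forall>i. right_seq \<tau> (right_wing g2') i = right_seq \<tau> (right_wing g2) (i + b)"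
    using right_ext_iterate[OF ne gen(2)] by blast
  have "right_seq \<tau> (right_wing g1') = right_seq \<tau> (right_wing g2')"
    using shift R1 R2 by auto
  then have "right_wing g1' = right_wing g2'"
    using right_seq_inj[OF ap] right_wing_nonempty g1'(1) g2'(1) by blast
  with g1' g2' show ?thesis by blast
qed

theorem mainTheorem6:
  fixes \<tau> :: "'a::finite \<Rightarrow> 'a list" and g1 g2 :: "'a gen"
  assumes "primitive \<tau>" and "aperiodic \<tau>"
    and "generator \<tau> g1" and "generator \<tau> g2"
  shows "right_tail_equiv (completion \<tau> g1) (completion \<tau> g2) \<longleftrightarrow>
    (\<exists>g1' g2'. generator \<tau> g1' \<and> generator \<tau> g2' \<and>
        G_related \<tau> g1' g1 \<and> G_related \<tau> g2' g2 \<and> right_wing g1' = right_wing g2')"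
proof
  assume "right_tail_equiv (completion \<tau> g1) (completion \<tau> g2)"
  then obtain g1' g2' where "generator \<tau> g1'" "generator \<tau> g2'"
    and "(ext_step \<tau>)\<^sup>*\<^sup>* g1 g1'" "(ext_step \<tau>)\<^sup>*\<^sup>* g2 g2'" and "right_wing g1' = right_wing g2'"
    using common_right_wing_if_right_tail_equiv[OF assms(2-4)] by blast
  with assms(3,4) show "\<exists>g1' g2'. generator \<tau> g1' \<and> generator \<tau> g2' \<and>
      G_related \<tau> g1' g1 \<and> G_related \<tau> g2' g2 \<and> right_wing g1' = right_wing g2'"
    unfolding G_related_def by blast
next
  have ne: "\<forall>a. \<tau> a \<noteq> []" using assms(1) by (simp add: primitive_def)
  assume "\<exists>g1' g2'. generator \<tau> g1' \<and> generator \<tau> g2' \<and>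
      G_related \<tau> g1' g1 \<and> G_related \<tau> g2' g2 \<and> right_wing g1' = right_wing g2'"
  then show "right_tail_equiv (completion \<tau> g1) (completion \<tau> g2)"
    by (meson right_tail_equiv_if_G_related[OF ne] right_tail_equiv_completion_if_right_wing_eq
        right_tail_equiv_sym right_tail_equiv_trans)
qed

end
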